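(* $\mathrm{PoTF}_{\textsc{Min-Max}}=\Theta(\min(\tau,n))$, i.e., the price of temporal fairness with respect to the \textsc{Min-Max} objective is both $O(\min(\tau,n))$ and $\Omega(\min(\tau,n))$, where $n$ is the number of agents and $\tau$ the number of constraints.
   Context: An instance $\mathcal{I}=(N,P,T,(\mathbf{D}_i)_{i\in N})$ has agents $N=[n]$, projects $P$, timesteps $T=[\ell]$, and disapproval sets $D_{ik}\subseteq P$. An outcome is $\mathbf{o}=(o_1,\dots,o_\ell)\in P^\ell$; $\Pi(\mathcal{I})$ is the set of all outcomes. $d_i(\mathbf{o}^{(k)})=|\{t\in[k]:o_t\in D_{it}\}|$ and $d_i(\mathbf{o})=d_i(\mathbf{o}^{(\ell)})$. A set of constraints is $\mathbf{A}=\{(t_1,\lambda_1),\dots,(t_\tau,\lambda_\tau)\}$ with $t_j\in T$, $\lambda_j\in\{0,\dots,\ell\}$, $t_1\le\dots\le t_\tau$, $\lambda_1\le\dots\le\lambda_\tau$; $\Pi_{\mathbf{A}}(\mathcal{I})$ is the set of outcomes with $\max_{i\in N}d_i(\mathbf{o}^{(t)})\le\lambda$ for all $(t,\lambda)\in\mathbf{A}$, and $\mathbf{A}$ is feasible if $\Pi_{\mathbf{A}}(\mathcal{I})\neq\emptyset$. The \textsc{Min-Max}-value of $\mathbf{o}$ is $\max_{i\in N}d_i(\mathbf{o})$. The price of temporal fairness is $\mathrm{PoTF}_{\textsc{Min-Max}}=\sup_{\mathcal{I},\mathbf{A}\text{ feasible}}\frac{\min_{\mathbf{o}\in\Pi_{\mathbf{A}}(\mathcal{I})}\max_i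 d_i(\mathbf{o})}{\min_{\mathbf{o}\in\Pi(\mathcal{I})}\max_i d_i(\mathbf{o})}$, considered as a function of $n$ and $\tau$. *)

theory Defs
  imports Main "HOL-Library.Extended_Real"
begin

(* Agents N = {1..n}, timesteps T = {1..l}, projects P (a finite nonempty set of nat
   labels), disapproval sets D i t (agent i, timestep t).
   An outcome is a function ou :: nat => nat with ou t \<in> P for every t \<in> T
   (values outside T are irrelevant). *)

definition valid_instance :: "nat \<Rightarrow> nat set \<Rightarrow> nat \<Rightarrow> (nat \<Rightarrow> nat \<Rightarrow> nat set) \<Rightarrow> bool" where
  "valid_instance n P l D \<longleftrightarrow> n \<ge> 1 \<and> finite P \<and> P \<noteq> {} \<and> l \<ge> 1 \<and>
     (\<forall>i\<in>{1..n}. \<forall>t\<in>{1..l}. D i t \<subseteq> P)"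

definition outcomes :: "nat set \<Rightarrow> nat \<Rightarrow> (nat \<Rightarrow> nat) set" where
  "outcomes P l = {ou. \<forall>t\<in>{1..l}. ou t \<in> P}"

definition disut :: "(nat \<Rightarrow> nat \<Rightarrow> nat set) \<Rightarrow> nat \<Rightarrow> (nat \<Rightarrow> nat) \<Rightarrow> nat \<Rightarrow> nat" where
  "disut D i ou k = card {t\<in>{1..k}. ou t \<in> D i t}"

definition maxdis :: "nat \<Rightarrow> (nat \<Rightarrow> nat \<Rightarrow> nat set) \<Rightarrow> (nat \<Rightarrow> nat) \<Rightarrow> nat \<Rightarrow> nat" where
  "maxdis n D ou k = Max ((\<lambda>i. disut D i ou k) ` {1..n})"

definition valid_constraints :: "nat \<Rightarrow> (nat \<times> nat) list \<Rightarrow> bool" where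
  "valid_constraints l A \<longleftrightarrow> distinct A \<and> sorted (map fst A) \<and> sorted (map snd A) \<and>
     (\<forall>(t, lam)\<in>set A. t \<in> {1..l} \<and> lam \<le> l)"

definition constrained_outcomes ::
  "nat \<Rightarrow> nat set \<Rightarrow> nat \<Rightarrow> (nat \<Rightarrow> nat \<Rightarrow> nat set) \<Rightarrow> (nat \<times> nat) list \<Rightarrow> (nat \<Rightarrow> nat) set" where
  "constrained_outcomes n P l D A =
     {ou \<in> outcomes P l. \<forall>(t, lam)\<in>set A. maxdis n D ou t \<le> lam}"

definition minmax_opt :: "nat \<Rightarrow> nat \<Rightarrow> (nat \<Rightarrow> nat \<Rightarrow> nat set) \<Rightarrow> (nat \<Rightarrow> nat) set \<Rightarrow> nat" where
  "minmax_opt n l D S = Min ((\<lambda>ou. maxdis n D ou l) ` S)"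

(* set of ratios realised by instances with n agents and feasible constraint sets of size tau;
   instances whose unconstrained optimum is 0 (ratio 0/0) are excluded *)
definition potf_ratios :: "nat \<Rightarrow> nat \<Rightarrow> real set" where
  "potf_ratios n tau =
     {real (minmax_opt n l D (constrained_outcomes n P l D A)) / real (minmax_opt n l D (outcomes P l))
      | P l D A. valid_instance n P l D \<and> valid_constraints l A \<and> length A = tau \<and>
          constrained_outcomes n P l D A \<noteq> {} \<and> minmax_opt n l D (outcomes P l) > 0}"

definition PoTF_MinMax :: "nat \<Rightarrow> nat \<Rightarrow> ereal" where
  "PoTF_MinMax n tau = (SUP x\<in>potf_ratios n tau. ereal x)"

end

theory Submission
  imports Defs
begin

(* Upper bound: let o1 be feasible and os an unconstrained optimum of value k.
   Following o1 exactly at the timesteps where some agent disapproves of os, and os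
   elsewhere, leaves every prefix disutility at most that of o1, so the constraints
   still hold, and each agent ends with at most n k.  Alternatively, follow o1 up to
   the time t_J of the last constraint with lambda_J <= J k and os afterwards: every
   later constraint has lambda_j > j k >= lambda_J + k, which absorbs the at most k
   disutility caused by os, so this outcome is feasible with value at most (tau + 1) k.

   Lower bound: with projects {0, 1} and timesteps 1..2 tau + 1, agent i disapproves
   project 1 before its phase {2i - 1, 2i}, project 0 during it, and both at the final
   timestep.  Agent j + 1 can afford only j + 1 disapprovals by time 2(j + 1), which
   forces project 1 to be chosen at least j times during the first j phases; hence
   agent n ends with disutility at least min tau n under the constraints (2j, j),
   whereas always choosing 0 costs every agent at most 3. *)

lemma card_filter_atLeastAtMost_Suc:
  "card {t \<in> {1..Suc k}. P t} = card {t \<in> {1..k}. P t} + of_bool (P (Suc k))"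
proof (cases "P (Suc k)")
  case True
  then have "{t \<in> {1..Suc k}. P t} = insert (Suc k) {t \<in> {1..k}. P t}"
    by (auto simp: le_Suc_eq)
  with True show ?thesis by simp
next
  case False
  then have "{t \<in> {1..Suc k}. P t} = {t \<in> {1..k}. P t}"
    by (auto simp: le_Suc_eq)
  with False show ?thesis by simp
qed

lemma disut_0 [simp]: "disut D i ou 0 = 0"
  by (simp add: disut_def)

lemma disut_Suc: "disut D i ou (Suc k) = disut D i ou k + of_bool (ou (Suc k) \<in> D i (Suc k))"
  unfolding disut_def by (rule card_filter_atLeastAtMost_Suc)

lemma disut_le: "disut D i ou k \<le> k"
proof -
  have "disut D i ou k \<le> card {1..k}"
    unfolding disut_def by (rule card_mono) auto
  then show ?thesis by simp
qed

lemma disut_mono: "k \<le> k' \<Longrightarrow> disut D i ou k \<le> disut D i ou k'"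
  unfolding disut_def by (rule card_mono) auto

lemma disut_le_disut:
  assumes "\<And>t. t \<in> {1..k} \<Longrightarrow> ou t \<in> D i t \<Longrightarrow> ou' t \<in> D' i' t"
  shows "disut D i ou k \<le> disut D' i' ou' k"
  unfolding disut_def by (rule card_mono) (use assms in auto)

lemma disut_le_maxdis: "i \<in> {1..n} \<Longrightarrow> disut D i ou k \<le> maxdis n D ou k"
  unfolding maxdis_def by (rule Max_ge) auto

lemma maxdis_le_iff: "n \<ge> 1 \<Longrightarrow> maxdis n D ou k \<le> c \<longleftrightarrow> (\<forall>i\<in>{1..n}. disut D i ou k \<le> c)"
  unfolding maxdis_def by (subst Max_le_iff) auto

lemma maxdis_le: "n \<ge> 1 \<Longrightarrow> maxdis n D ou k \<le> k"
  by (simp add: maxdis_le_iff disut_le)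

lemma maxdis_mono: "n \<ge> 1 \<Longrightarrow> k \<le> k' \<Longrightarrow> maxdis n D ou k \<le> maxdis n D ou k'"
  unfolding maxdis_le_iff by (meson disut_le_maxdis disut_mono le_trans)

lemma finite_maxdis_image: "n \<ge> 1 \<Longrightarrow> finite ((\<lambda>ou. maxdis n D ou l) ` S)"
  by (rule finite_subset[of _ "{..l}"]) (auto intro: maxdis_le)

lemma minmax_opt_le: "n \<ge> 1 \<Longrightarrow> ou \<in> S \<Longrightarrow> minmax_opt n l D S \<le> maxdis n D ou l"
  unfolding minmax_opt_def by (rule Min_le) (auto intro: finite_maxdis_image)

lemma le_minmax_opt:
  "n \<ge> 1 \<Longrightarrow> S \<noteq> {} \<Longrightarrow> (\<And>ou. ou \<in> S \<Longrightarrow> c \<le> maxdis n D ou l) \<Longrightarrow>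
    c \<le> minmax_opt n l D S"
  unfolding minmax_opt_def by (subst Min_ge_iff) (auto intro: finite_maxdis_image)

lemma minmax_opt_attained:
  "n \<ge> 1 \<Longrightarrow> S \<noteq> {} \<Longrightarrow> \<exists>ou\<in>S. minmax_opt n l D S = maxdis n D ou l"
  unfolding minmax_opt_def using Min_in[OF finite_maxdis_image[of n D l S]] by auto

lemma constrained_outcomes_dominated:
  assumes "n \<ge> 1" and "o1 \<in> constrained_outcomes n P l D A" and "ou \<in> outcomes P l"
    and "\<And>i t. i \<in> {1..n} \<Longrightarrow> disut D i ou t \<le> disut D i o1 t"
  shows "ou \<in> constrained_outcomes n P l D A"
proof -
  have "maxdis n D ou t \<le> lam" if "(t, lam) \<in> set A" for t lam
  proof -
    have "maxdis n D ou t \<le> maxdis n D o1 t"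
      unfolding maxdis_le_iff[OF assms(1)] by (meson assms(4) disut_le_maxdis le_trans)
    also have "\<dots> \<le> lam"
      using assms(2) that unfolding constrained_outcomes_def by auto
    finally show ?thesis .
  qed
  with assms(3) show ?thesis
    unfolding constrained_outcomes_def by auto
qed

lemma minmax_opt_constrained_le_agents:
  assumes "n \<ge> 1" and "o1 \<in> constrained_outcomes n P l D A" and "os \<in> outcomes P l"
  shows "minmax_opt n l D (constrained_outcomes n P l D A) \<le> n * maxdis n D os l"
proof -
  define B where "B = {t. \<exists>j\<in>{1..n}. os t \<in> D j t}"
  define ou where "ou t = (if t \<in> B then o1 t else os t)" for t
  have "ou \<in> outcomes P l"
    using assms(2,3) unfolding constrained_outcomes_def outcomes_def ou_def by auto
  moreover have "disut D i ou t \<le> disut D i o1 t" if "i \<in> {1..n}" for i t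
    by (rule disut_le_disut) (use that in \<open>auto simp: ou_def B_def split: if_splits\<close>)
  ultimately have ou: "ou \<in> constrained_outcomes n P l D A"
    by (rule constrained_outcomes_dominated[OF assms(1,2)])
  have "disut D i ou l \<le> n * maxdis n D os l" if "i \<in> {1..n}" for i
  proof -
    have "disut D i ou l \<le> card (\<Union>j\<in>{1..n}. {t \<in> {1..l}. os t \<in> D j t})"
      unfolding disut_def by (rule card_mono) (use that in \<open>auto simp: ou_def B_def split: if_splits\<close>)
    also have "\<dots> \<le> (\<Sum>j\<in>{1..n}. disut D j os l)"
      unfolding disut_def by (rule card_UN_le) simp
    also have "\<dots> \<le> (\<Sum>j\<in>{1..n}. maxdis n D os l)"
      by (rule sum_mono) (rule disut_le_maxdis)
    finally show ?thesis by simp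
  qed
  then have "maxdis n D ou l \<le> n * maxdis n D os l"
    by (simp add: maxdis_le_iff[OF assms(1)])
  with minmax_opt_le[OF assms(1) ou] show ?thesis by (rule order_trans)
qed

definition switch_at :: "nat \<Rightarrow> (nat \<Rightarrow> nat) \<Rightarrow> (nat \<Rightarrow> nat) \<Rightarrow> nat \<Rightarrow> nat" where
  "switch_at t0 o1 o2 t = (if t \<le> t0 then o1 t else o2 t)"

lemma switch_at_in_outcomes:
  "o1 \<in> outcomes P l \<Longrightarrow> o2 \<in> outcomes P l \<Longrightarrow> switch_at t0 o1 o2 \<in> outcomes P l"
  by (simp add: outcomes_def switch_at_def)

lemma disut_switch_at_eq: "t \<le> t0 \<Longrightarrow> disut D i (switch_at t0 o1 o2) t = disut D i o1 t"
  unfolding disut_def switch_at_def by (rule arg_cong[where f = card]) auto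

lemma maxdis_switch_at_eq: "t \<le> t0 \<Longrightarrow> maxdis n D (switch_at t0 o1 o2) t = maxdis n D o1 t"
  by (simp add: maxdis_def disut_switch_at_eq)

lemma maxdis_switch_at_le:
  assumes "n \<ge> 1"
  shows "maxdis n D (switch_at t0 o1 o2) t \<le> maxdis n D o1 t0 + maxdis n D o2 t"
  unfolding maxdis_le_iff[OF assms]
proof
  fix i assume i: "i \<in> {1..n}"
  have "disut D i (switch_at t0 o1 o2) t \<le>
      card ({s \<in> {1..t0}. o1 s \<in> D i s} \<union> {s \<in> {1..t}. o2 s \<in> D i s})"
    unfolding disut_def switch_at_def by (rule card_mono) auto
  also have "\<dots> \<le> disut D i o1 t0 + disut D i o2 t"
    unfolding disut_def by (rule card_Un_le)
  also have "\<dots> \<le> maxdis n D o1 t0 + maxdis n D o2 t"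
    using i by (intro add_mono disut_le_maxdis)
  finally show "disut D i (switch_at t0 o1 o2) t \<le> maxdis n D o1 t0 + maxdis n D o2 t" .
qed

lemma switch_point_exists:
  assumes "sorted (map fst A)"
  shows "\<exists>t0 lam0. (t0, lam0) \<in> insert (0, 0) (set A) \<and> lam0 \<le> length A * k \<and>
           (\<forall>(t, lam) \<in> set A. t \<le> t0 \<or> lam0 + k \<le> lam)"
  using assms
proof (induction A rule: rev_induct)
  case Nil
  show ?case by simp
next
  case (snoc c A)
  obtain tc lc where c: "c = (tc, lc)" by fastforce
  have sorted: "sorted (map fst A)" and before: "\<forall>(t, lam) \<in> set A. t \<le> tc"
    using snoc.prems c by (auto simp: sorted_append)
  show ?case
  proof (cases "lc \<le> length (A @ [c]) * k")
    case True
    moreover have "\<forall>(t, lam) \<in> set (A @ [c]). t \<le> tc \<or> lc + k \<le> lam"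
      using before c by auto
    moreover have "(tc, lc) \<in> insert (0, 0) (set (A @ [c]))"
      using c by simp
    ultimately show ?thesis by blast
  next
    case False
    from snoc.IH[OF sorted] obtain t0 lam0 where t0: "(t0, lam0) \<in> insert (0, 0) (set A)"
      and lam0: "lam0 \<le> length A * k" and slack: "\<forall>(t, lam) \<in> set A. t \<le> t0 \<or> lam0 + k \<le> lam"
      by blast
    from lam0 False c have "lam0 + k \<le> snd c" by simp
    with slack have "\<forall>(t, lam) \<in> set (A @ [c]). t \<le> t0 \<or> lam0 + k \<le> lam"
      by auto
    moreover from t0 have "(t0, lam0) \<in> insert (0, 0) (set (A @ [c]))"
      by auto
    moreover from lam0 have "lam0 \<le> length (A @ [c]) * k"
      by simp
    ultimately show ?thesis by blast
  qed
qed

lemma minmax_opt_constrained_le_constraints: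
  assumes "n \<ge> 1" and "valid_constraints l A"
    and "o1 \<in> constrained_outcomes n P l D A" and "os \<in> outcomes P l"
  shows "minmax_opt n l D (constrained_outcomes n P l D A) \<le> (length A + 1) * maxdis n D os l"
proof -
  define k where "k = maxdis n D os l"
  have sorted: "sorted (map fst A)" and A_le_l: "\<And>t lam. (t, lam) \<in> set A \<Longrightarrow> t \<le> l"
    using assms(2) by (auto simp: valid_constraints_def)
  obtain t0 lam0 where t0: "(t0, lam0) \<in> insert (0, 0) (set A)" and lam0: "lam0 \<le> length A * k"
    and slack: "\<forall>(t, lam) \<in> set A. t \<le> t0 \<or> lam0 + k \<le> lam"
    using switch_point_exists[OF sorted, of k] by blast
  have o1: "o1 \<in> outcomes P l" "\<And>t lam. (t, lam) \<in> set A \<Longrightarrow> maxdis n D o1 t \<le> lam"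
    using assms(3) by (auto simp: constrained_outcomes_def)
  have "maxdis n D o1 t0 \<le> lam0"
    using t0 o1(2) maxdis_le[OF assms(1), of D o1 0] by auto
  then have bound: "maxdis n D (switch_at t0 o1 os) t \<le> lam0 + k" if "t \<le> l" for t
    using maxdis_switch_at_le[OF assms(1), of D t0 o1 os t] maxdis_mono[OF assms(1) that, of D os]
    unfolding k_def by linarith
  have "maxdis n D (switch_at t0 o1 os) t \<le> lam" if c: "(t, lam) \<in> set A" for t lam
  proof (cases "t \<le> t0")
    case True
    with o1(2)[OF c] show ?thesis by (simp add: maxdis_switch_at_eq)
  next
    case False
    with slack c have "lam0 + k \<le> lam" by blast
    with bound[OF A_le_l[OF c]] show ?thesis by simp
  qed
  with o1(1) assms(4) have "switch_at t0 o1 os \<in> constrained_outcomes n P l D A"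
    unfolding constrained_outcomes_def by (auto intro: switch_at_in_outcomes)
  with minmax_opt_le[OF assms(1)] have "minmax_opt n l D (constrained_outcomes n P l D A) \<le> lam0 + k"
    using bound[of l] order_trans by blast
  with lam0 show ?thesis unfolding k_def by simp
qed

lemma potf_ratios_le:
  assumes "x \<in> potf_ratios n tau" and "n \<ge> 1"
  shows "x \<le> real (min n (tau + 1))"
proof -
  obtain P l D A where x: "x = real (minmax_opt n l D (constrained_outcomes n P l D A)) /
        real (minmax_opt n l D (outcomes P l))"
    and vc: "valid_constraints l A" and len: "length A = tau"
    and feasible: "constrained_outcomes n P l D A \<noteq> {}"
    and pos: "minmax_opt n l D (outcomes P l) > 0"
    using assms(1) unfolding potf_ratios_def by blast
  define C where "C = minmax_opt n l D (constrained_outcomes n P l D A)"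
  define Opt where "Opt = minmax_opt n l D (outcomes P l)"
  obtain o1 where o1: "o1 \<in> constrained_outcomes n P l D A"
    using feasible by blast
  then have "outcomes P l \<noteq> {}"
    unfolding constrained_outcomes_def by auto
  then obtain os where os: "os \<in> outcomes P l" and Opt: "Opt = maxdis n D os l"
    using minmax_opt_attained[OF assms(2)] unfolding Opt_def by blast
  have "C \<le> n * Opt" and "C \<le> (tau + 1) * Opt"
    using minmax_opt_constrained_le_agents[OF assms(2) o1 os]
      minmax_opt_constrained_le_constraints[OF assms(2) vc o1 os]
    unfolding C_def Opt len by simp_all
  then have "real C \<le> real (min n (tau + 1)) * real Opt"
    by (simp add: min_def flip: of_nat_mult)
  with pos show ?thesis
    unfolding x C_def[symmetric] Opt_def[symmetric] by (simp add: divide_le_eq)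
qed

definition lb_disapprovals :: "nat \<Rightarrow> nat \<Rightarrow> nat \<Rightarrow> nat set" where
  "lb_disapprovals T i t =
     (if t = 2 * T + 1 then {0, 1} else if t \<le> 2 * (i - 1) then {1} else if t \<le> 2 * i then {0} else {})"

definition lb_constraints :: "nat \<Rightarrow> (nat \<times> nat) list" where
  "lb_constraints T = map (\<lambda>j. (2 * j, j)) [1..<T + 1]"

definition alternating :: "nat \<Rightarrow> nat" where
  "alternating t = (if odd t then 0 else 1)"

lemma lb_instance_valid: "n \<ge> 1 \<Longrightarrow> valid_instance n {0, 1} (2 * T + 1) (lb_disapprovals T)"
  by (auto simp: valid_instance_def lb_disapprovals_def)

lemma lb_constraints_valid: "valid_constraints (2 * T + 1) (lb_constraints T)"
  by (auto simp: valid_constraints_def lb_constraints_def distinct_map inj_on_def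
      sorted_iff_nth_mono simp del: upt_Suc)

lemma length_lb_constraints [simp]: "length (lb_constraints T) = T"
  by (simp add: lb_constraints_def)

lemma disut_alternating: "j \<le> T \<Longrightarrow> disut (lb_disapprovals T) i alternating (2 * j) \<le> j"
proof (induction j)
  case 0
  show ?case by simp
next
  case (Suc j)
  have "\<not> (0 \<in> lb_disapprovals T i (2 * j + 1) \<and> 1 \<in> lb_disapprovals T i (2 * j + 2))"
    using Suc.prems by (auto simp: lb_disapprovals_def)
  with Suc show ?case
    by (auto simp: disut_Suc alternating_def)
qed

lemma alternating_feasible:
  "n \<ge> 1 \<Longrightarrow>
    alternating \<in> constrained_outcomes n {0, 1} (2 * T + 1) (lb_disapprovals T) (lb_constraints T)"
  by (auto simp: constrained_outcomes_def outcomes_def alternating_def lb_constraints_def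
      maxdis_le_iff disut_alternating)

lemma lb_minmax_opt_bounds:
  assumes "n \<ge> 1"
  shows "minmax_opt n (2 * T + 1) (lb_disapprovals T) (outcomes {0, 1} (2 * T + 1)) \<in> {1..3}"
  unfolding atLeastAtMost_iff
proof
  have "1 \<le> maxdis n (lb_disapprovals T) ou (2 * T + 1)" if "ou \<in> outcomes {0, 1} (2 * T + 1)" for ou
  proof -
    have "1 \<le> disut (lb_disapprovals T) 1 ou (2 * T + 1)"
      using that by (simp add: disut_Suc outcomes_def lb_disapprovals_def)
    also have "\<dots> \<le> maxdis n (lb_disapprovals T) ou (2 * T + 1)"
      by (rule disut_le_maxdis) (use assms in simp)
    finally show ?thesis .
  qed
  then show "1 \<le> minmax_opt n (2 * T + 1) (lb_disapprovals T) (outcomes {0, 1} (2 * T + 1))"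
    by (intro le_minmax_opt[OF assms]) (auto simp: outcomes_def)
next
  have zero: "(\<lambda>_. 0) \<in> outcomes {0, 1} (2 * T + 1)"
    by (simp add: outcomes_def)
  have "disut (lb_disapprovals T) i (\<lambda>_. 0) (2 * T + 1) \<le> card {2 * i - 1, 2 * i, 2 * T + 1}" for i
    unfolding disut_def by (rule card_mono) (auto simp: lb_disapprovals_def split: if_splits)
  also have "card {2 * i - 1, 2 * i, 2 * T + 1} \<le> 3" for i
    by (simp add: card_insert_if)
  finally have "maxdis n (lb_disapprovals T) (\<lambda>_. 0) (2 * T + 1) \<le> 3"
    by (simp add: maxdis_le_iff[OF assms])
  with minmax_opt_le[OF assms zero]
  show "minmax_opt n (2 * T + 1) (lb_disapprovals T) (outcomes {0, 1} (2 * T + 1)) \<le> 3"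
    by (rule order_trans)
qed

lemma disut_lb_disapprovals_early:
  assumes "s \<le> 2 * (i - 1)" and "s \<le> 2 * T"
  shows "disut (lb_disapprovals T) i ou s = card {t \<in> {1..s}. ou t = 1}"
  unfolding disut_def using assms by (intro arg_cong[where f = card]) (auto simp: lb_disapprovals_def)

lemma lb_constrained_ones_ge:
  assumes ou: "ou \<in> constrained_outcomes n {0, 1} (2 * T + 1) (lb_disapprovals T) (lb_constraints T)"
  shows "j \<le> T \<Longrightarrow> j \<le> n \<Longrightarrow> j \<le> card {t \<in> {1..2 * j}. ou t = 1}"
proof (induction j)
  case 0
  show ?case by simp
next
  case (Suc j)
  let ?ones = "\<lambda>s. card {t \<in> {1..s}. ou t = 1}"
  have IH: "j \<le> ?ones (2 * j)"
    using Suc by simp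
  have binary: "of_bool (ou t = 0) + of_bool (ou t = 1) = (1 :: nat)" if "t \<in> {1..2 * T + 1}" for t
  proof -
    have "ou t \<in> {0, 1}"
      using ou that by (simp add: constrained_outcomes_def outcomes_def)
    then show ?thesis by auto
  qed
  have "(2 * Suc j, Suc j) \<in> set (lb_constraints T)"
    using Suc.prems by (auto simp: lb_constraints_def image_iff simp del: upt_Suc)
  with ou have "maxdis n (lb_disapprovals T) ou (2 * Suc j) \<le> Suc j"
    by (auto simp: constrained_outcomes_def)
  moreover have "disut (lb_disapprovals T) (Suc j) ou (2 * Suc j) \<le>
      maxdis n (lb_disapprovals T) ou (2 * Suc j)"
    by (rule disut_le_maxdis) (use Suc.prems in simp)
  moreover have "disut (lb_disapprovals T) (Suc j) ou (2 * Suc j) =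
      ?ones (2 * j) + of_bool (ou (2 * j + 1) = 0) + of_bool (ou (2 * j + 2) = 0)"
    using Suc.prems
    by (simp add: disut_Suc disut_lb_disapprovals_early) (simp add: lb_disapprovals_def)
  moreover have "?ones (2 * Suc j) =
      ?ones (2 * j) + of_bool (ou (2 * j + 1) = 1) + of_bool (ou (2 * j + 2) = 1)"
    using card_filter_atLeastAtMost_Suc[of "2 * j" "\<lambda>t. ou t = 1"]
      card_filter_atLeastAtMost_Suc[of "Suc (2 * j)" "\<lambda>t. ou t = 1"] by simp
  moreover have "of_bool (ou (2 * j + 1) = 0) + of_bool (ou (2 * j + 1) = 1) = (1 :: nat)"
    and "of_bool (ou (2 * j + 2) = 0) + of_bool (ou (2 * j + 2) = 1) = (1 :: nat)"
    by (rule binary, use Suc.prems in simp)+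
  ultimately show ?case
    using IH by linarith
qed

lemma lb_constrained_maxdis_ge:
  assumes n: "n \<ge> 1"
    and ou: "ou \<in> constrained_outcomes n {0, 1} (2 * T + 1) (lb_disapprovals T) (lb_constraints T)"
  shows "min T n \<le> maxdis n (lb_disapprovals T) ou (2 * T + 1)"
proof -
  define q where "q = min T (n - 1)"
  have "q \<le> card {t \<in> {1..2 * q}. ou t = 1}"
    using lb_constrained_ones_ge[OF ou] by (simp add: q_def)
  also have "\<dots> = disut (lb_disapprovals T) n ou (2 * q)"
    by (rule disut_lb_disapprovals_early[symmetric]) (simp_all add: q_def)
  also have "\<dots> \<le> disut (lb_disapprovals T) n ou (2 * T)"
    by (rule disut_mono) (simp add: q_def)
  finally have "q + 1 \<le> disut (lb_disapprovals T) n ou (2 * T) + 1"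
    by simp
  also have "\<dots> = disut (lb_disapprovals T) n ou (2 * T + 1)"
    using ou by (simp add: disut_Suc constrained_outcomes_def outcomes_def lb_disapprovals_def)
  also have "\<dots> \<le> maxdis n (lb_disapprovals T) ou (2 * T + 1)"
    by (rule disut_le_maxdis) (use n in simp)
  finally show ?thesis
    unfolding q_def by linarith
qed

lemma ex_potf_ratio_ge:
  assumes "n \<ge> 1"
  shows "\<exists>x \<in> potf_ratios n tau. real (min tau n) / 3 \<le> x"
proof -
  let ?D = "lb_disapprovals tau" and ?l = "2 * tau + 1"
  let ?C = "minmax_opt n ?l ?D (constrained_outcomes n {0, 1} ?l ?D (lb_constraints tau))"
  let ?Opt = "minmax_opt n ?l ?D (outcomes {0, 1} ?l)"
  have feasible: "constrained_outcomes n {0, 1} ?l ?D (lb_constraints tau) \<noteq> {}"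
    using alternating_feasible[OF assms] by blast
  have Opt: "1 \<le> ?Opt" "?Opt \<le> 3"
    using lb_minmax_opt_bounds[OF assms] by simp_all
  have "min tau n \<le> ?C"
    by (rule le_minmax_opt[OF assms feasible]) (rule lb_constrained_maxdis_ge[OF assms])
  then have "real (min tau n) / 3 \<le> real ?C / real ?Opt"
    using Opt by (intro frac_le) simp_all
  moreover have "real ?C / real ?Opt \<in> potf_ratios n tau"
    unfolding potf_ratios_def using lb_instance_valid[OF assms] lb_constraints_valid feasible Opt
    by (intro CollectI exI[of _ "{0, 1}"] exI[of _ ?l] exI[of _ ?D] exI[of _ "lb_constraints tau"]) simp
  ultimately show ?thesis by blast
qed

theorem theorem8:
  shows "\<exists>c1 c2 :: real. c1 > 0 \<and> c2 > 0 \<and>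
    (\<forall>n tau :: nat. n \<ge> 1 \<longrightarrow> tau \<ge> 1 \<longrightarrow>
       ereal (c1 * real (min tau n)) \<le> PoTF_MinMax n tau \<and>
       PoTF_MinMax n tau \<le> ereal (c2 * real (min tau n)))"
proof (rule exI[of _ "1 / 3"], rule exI[of _ 2], intro conjI allI impI)
  fix n tau :: nat
  assume n: "n \<ge> 1" and tau: "tau \<ge> 1"
  obtain x where x: "x \<in> potf_ratios n tau" "real (min tau n) / 3 \<le> x"
    using ex_potf_ratio_ge[OF n] by blast
  then have "ereal (1 / 3 * real (min tau n)) \<le> ereal x"
    by simp
  also have "\<dots> \<le> PoTF_MinMax n tau"
    unfolding PoTF_MinMax_def using x(1) by (rule SUP_upper)
  finally show "ereal (1 / 3 * real (min tau n)) \<le> PoTF_MinMax n tau" .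
  have "y \<le> 2 * real (min tau n)" if "y \<in> potf_ratios n tau" for y
    using potf_ratios_le[OF that n] tau by simp
  then show "PoTF_MinMax n tau \<le> ereal (2 * real (min tau n))"
    unfolding PoTF_MinMax_def by (simp add: SUP_least)
qed simp_all

end
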